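(* Let $G$ be a finite $p$-group. Then for every $k\geq 1$, $[\lambda_k(G),G^\varphi]=[G,(\lambda_k(G))^\varphi]$ in $\nu(G)$.
   Context: Conventions: ${}^gh=ghg^{-1}$ and $[g,h]=ghg^{-1}h^{-1}$. For a group $G$ let $G^\varphi$ be an isomorphic copy of $G$ via $\varphi:G\to G^\varphi$. The group $\nu(G)$ is the quotient of the free product $G\ast G^\varphi$ by the normal subgroup generated by all words ${}^{g_3}[g_1,g_2^\varphi]\cdot[{}^{g_3}g_1,({}^{g_3}g_2)^\varphi]^{-1}$ and ${}^{g_3^\varphi}[g_1,g_2^\varphi]\cdot[{}^{g_3}g_1,({}^{g_3}g_2)^\varphi]^{-1}$, $g_1,g_2,g_3\in G$. For subgroups $A,B\le G$, $[A,B^\varphi]$ is the subgroup of $\nu(G)$ generated by all $[a,b^\varphi]$, $a\in A$, $b\in B$. The lower central $p$-series is $\lambda_1(G)=G$, $\lambda_{k+1}(G)=[\lambda_k(G),G]\lambda_k(G)^p$. *)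

theory Defs
  imports "HOL-Algebra.Algebra"
begin

text \<open>A letter is a generator together with a flag: (s, False) stands for s,
  (s, True) for s inverse. Words are lists of letters.\<close>

type_synonym 's letter = "'s \<times> bool"

definition inv_word :: "'s letter list \<Rightarrow> 's letter list" where
  "inv_word w = rev (map (\<lambda>(s, b). (s, \<not> b)) w)"

definition words :: "'s set \<Rightarrow> 's letter list set" where
  "words S = {w. set w \<subseteq> S \<times> UNIV}"

inductive_set pres_rel :: "'s set \<Rightarrow> 's letter list set \<Rightarrow> ('s letter list \<times> 's letter list) set"
  for S :: "'s set" and R :: "'s letter list set" where
  refl: "w \<in> words S \<Longrightarrow> (w, w) \<in> pres_rel S R"
| sym: "(u, v) \<in> pres_rel S R \<Longrightarrow> (v, u) \<in> pres_rel S R"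
| trans: "(u, v) \<in> pres_rel S R \<Longrightarrow> (v, w) \<in> pres_rel S R \<Longrightarrow> (u, w) \<in> pres_rel S R"
| cancel: "s \<in> S \<Longrightarrow> ([(s, b), (s, \<not> b)], []) \<in> pres_rel S R"
| relator: "r \<in> R \<Longrightarrow> r \<in> words S \<Longrightarrow> (r, []) \<in> pres_rel S R"
| ctxt: "(u, v) \<in> pres_rel S R \<Longrightarrow> a \<in> words S \<Longrightarrow> c \<in> words S \<Longrightarrow>
         (a @ u @ c, a @ v @ c) \<in> pres_rel S R"

definition pres_mult :: "'s set \<Rightarrow> 's letter list set \<Rightarrow> 's letter list set \<Rightarrow> 's letter list set \<Rightarrow> 's letter list set" where
  "pres_mult S R A B = pres_rel S R `` {(SOME x. x \<in> A) @ (SOME y. y \<in> B)}"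

definition presented_group :: "'s set \<Rightarrow> 's letter list set \<Rightarrow> 's letter list set monoid" where
  "presented_group S R =
     \<lparr> carrier = words S // pres_rel S R,
       monoid.mult = pres_mult S R,
       one = pres_rel S R `` {[]} \<rparr>"

text \<open>Generators: Inl g stands for g in G, Inr g for g^phi in G^phi.\<close>

definition comm_word :: "'s \<Rightarrow> 's \<Rightarrow> 's letter list" where
  "comm_word x y = [(x, False), (y, False), (x, True), (y, True)]"

definition conj_word :: "'s \<Rightarrow> 's letter list \<Rightarrow> 's letter list" where
  "conj_word c w = [(c, False)] @ w @ [(c, True)]"

definition gconj :: "('a, 'b) monoid_scheme \<Rightarrow> 'a \<Rightarrow> 'a \<Rightarrow> 'a" where
  "gconj G g h = g \<otimes>\<^bsub>G\<^esub> h \<otimes>\<^bsub>G\<^esub> inv\<^bsub>G\<^esub> g"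

definition gcomm :: "('a, 'b) monoid_scheme \<Rightarrow> 'a \<Rightarrow> 'a \<Rightarrow> 'a" where
  "gcomm G x y = x \<otimes>\<^bsub>G\<^esub> y \<otimes>\<^bsub>G\<^esub> inv\<^bsub>G\<^esub> x \<otimes>\<^bsub>G\<^esub> inv\<^bsub>G\<^esub> y"

text \<open>Relators of the free product G * G^phi (the multiplication tables of both copies).\<close>
definition free_prod_relators :: "('a, 'b) monoid_scheme \<Rightarrow> ('a + 'a) letter list set" where
  "free_prod_relators G =
     {[(Inl g, False), (Inl h, False), (Inl (g \<otimes>\<^bsub>G\<^esub> h), True)] | g h. g \<in> carrier G \<and> h \<in> carrier G}
   \<union> {[(Inr g, False), (Inr h, False), (Inr (g \<otimes>\<^bsub>G\<^esub> h), True)] | g h. g \<in> carrier G \<and> h \<in> carrier G}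
   \<union> {[(Inl \<one>\<^bsub>G\<^esub>, False)], [(Inr \<one>\<^bsub>G\<^esub>, False)]}"

definition nu_relators :: "('a, 'b) monoid_scheme \<Rightarrow> ('a + 'a) letter list set" where
  "nu_relators G =
     {conj_word (Inl g3) (comm_word (Inl g1) (Inr g2))
        @ inv_word (comm_word (Inl (gconj G g3 g1)) (Inr (gconj G g3 g2)))
      | g1 g2 g3. g1 \<in> carrier G \<and> g2 \<in> carrier G \<and> g3 \<in> carrier G}
   \<union> {conj_word (Inr g3) (comm_word (Inl g1) (Inr g2))
        @ inv_word (comm_word (Inl (gconj G g3 g1)) (Inr (gconj G g3 g2)))
      | g1 g2 g3. g1 \<in> carrier G \<and> g2 \<in> carrier G \<and> g3 \<in> carrier G}"

definition nu :: "('a, 'b) monoid_scheme \<Rightarrow> ('a + 'a) letter list set monoid" where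
  "nu G = presented_group (carrier G <+> carrier G) (free_prod_relators G \<union> nu_relators G)"

definition nu_emb :: "('a, 'b) monoid_scheme \<Rightarrow> 'a \<Rightarrow> ('a + 'a) letter list set" where
  "nu_emb G g = pres_rel (carrier G <+> carrier G) (free_prod_relators G \<union> nu_relators G) `` {[(Inl g, False)]}"

definition nu_phi :: "('a, 'b) monoid_scheme \<Rightarrow> 'a \<Rightarrow> ('a + 'a) letter list set" where
  "nu_phi G g = pres_rel (carrier G <+> carrier G) (free_prod_relators G \<union> nu_relators G) `` {[(Inr g, False)]}"

definition nu_comm_subgroup :: "('a, 'b) monoid_scheme \<Rightarrow> 'a set \<Rightarrow> 'a set \<Rightarrow> ('a + 'a) letter list set set" where
  "nu_comm_subgroup G A B =
     generate (nu G) {gcomm (nu G) (nu_emb G a) (nu_phi G b) | a b. a \<in> A \<and> b \<in> B}"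

text \<open>lcp_aux G p k is lambda_(k+1)(G).\<close>
primrec lcp_aux :: "('a, 'b) monoid_scheme \<Rightarrow> nat \<Rightarrow> nat \<Rightarrow> 'a set" where
  "lcp_aux G p 0 = carrier G"
| "lcp_aux G p (Suc k) =
     generate G ({gcomm G x y | x y. x \<in> lcp_aux G p k \<and> y \<in> carrier G}
                 \<union> {x [^]\<^bsub>G\<^esub> p | x. x \<in> lcp_aux G p k})"

definition lower_central_p :: "('a, 'b) monoid_scheme \<Rightarrow> nat \<Rightarrow> nat \<Rightarrow> 'a set" where
  "lower_central_p G p k = lcp_aux G p (k - 1)"

definition p_group :: "('a, 'b) monoid_scheme \<Rightarrow> nat \<Rightarrow> bool" where
  "p_group G p \<longleftrightarrow> group G \<and> finite (carrier G) \<and> Factorial_Ring.prime p \<and> (\<exists>n. card (carrier G) = p ^ n)"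

end

theory Submission
  imports Defs
begin

text \<open>Let \<open>A = \<lambda>\<^sub>k(G)\<close>, \<open>B = \<lambda>\<^sub>k\<^sub>+\<^sub>1(G) = \<langle>[A, G], A\<^sup>p\<rangle>\<close> and
  \<open>K = [G, B\<^sup>\<phi>]\<close>, a normal subgroup of \<open>\<nu>(G)\<close>; it suffices to put \<open>[b, h\<^sup>\<phi>]\<close> into \<open>K\<close>
  for the generators \<open>b\<close> of \<open>B\<close>. For \<open>b = [x, g]\<close> this follows from the identity
  \<open>[[x, g], z\<^sup>\<phi>] = \<^sup>[\<^sup>x\<^sup>,\<^sup>g\<^sup>\<phi>\<^sup>][z, [g, x]\<^sup>\<phi>]\<close>. Modulo \<open>K\<close> every \<open>[a, b\<^sup>\<phi>]\<close> with \<open>a\<close> or \<open>b\<close>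
  in \<open>A\<close> is central, hence \<open>[x\<^sup>p, h\<^sup>\<phi>] \<equiv> [x, h\<^sup>\<phi>]\<^sup>p\<close>. By induction \<open>[x, h\<^sup>\<phi>] \<in> [G, A\<^sup>\<phi>]\<close>,
  and every element of \<open>[G, A\<^sup>\<phi>]\<close> has trivial \<open>p\<close>-th power modulo \<open>K\<close>, because
  \<open>[g, b\<^sup>\<phi>]\<^sup>p \<equiv> [g, (b\<^sup>p)\<^sup>\<phi>]\<close>. The reverse inclusion follows by exchanging the roles of \<open>G\<close>
  and \<open>G\<^sup>\<phi>\<close>.\<close>

section \<open>Commutator calculus\<close>

context group begin

lemma gconj_closed [simp]: "x \<in> carrier G \<Longrightarrow> y \<in> carrier G \<Longrightarrow> gconj G x y \<in> carrier G"
  by (simp add: gconj_def)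

lemma gcomm_closed [simp]: "x \<in> carrier G \<Longrightarrow> y \<in> carrier G \<Longrightarrow> gcomm G x y \<in> carrier G"
  by (simp add: gcomm_def)

lemma mult_inv_cancel_left [simp]: "x \<in> carrier G \<Longrightarrow> y \<in> carrier G \<Longrightarrow> x \<otimes> (inv x \<otimes> y) = y"
  by (simp add: m_assoc [symmetric])

lemma inv_mult_cancel_left [simp]: "x \<in> carrier G \<Longrightarrow> y \<in> carrier G \<Longrightarrow> inv x \<otimes> (x \<otimes> y) = y"
  by (simp add: m_assoc [symmetric])

lemmas commutator_simps = gcomm_def gconj_def m_assoc inv_mult_group

lemma gcomm_mult_left:
  "x \<in> carrier G \<Longrightarrow> y \<in> carrier G \<Longrightarrow> z \<in> carrier G \<Longrightarrow>
   gcomm G (x \<otimes> y) z = gconj G x (gcomm G y z) \<otimes> gcomm G x z"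
  by (simp add: commutator_simps)

lemma gcomm_mult_right:
  "x \<in> carrier G \<Longrightarrow> y \<in> carrier G \<Longrightarrow> z \<in> carrier G \<Longrightarrow>
   gcomm G x (y \<otimes> z) = gcomm G x y \<otimes> gconj G y (gcomm G x z)"
  by (simp add: commutator_simps)

lemma gcomm_inv_left:
  "x \<in> carrier G \<Longrightarrow> z \<in> carrier G \<Longrightarrow> gcomm G (inv x) z = gconj G (inv x) (inv (gcomm G x z))"
  by (simp add: commutator_simps)

lemma inv_gcomm: "x \<in> carrier G \<Longrightarrow> y \<in> carrier G \<Longrightarrow> inv (gcomm G x y) = gcomm G y x"
  by (simp add: commutator_simps)

lemma gcomm_eq_gconj_inv_gcomm_inv:
  "x \<in> carrier G \<Longrightarrow> y \<in> carrier G \<Longrightarrow> gcomm G x y = gconj G x (inv (gcomm G (inv x) y))"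
  by (simp add: commutator_simps)

lemma gconj_eq_gcomm_mult: "x \<in> carrier G \<Longrightarrow> y \<in> carrier G \<Longrightarrow> gconj G x y = gcomm G x y \<otimes> y"
  by (simp add: commutator_simps)

lemma gcomm_eq_gconj_mult_inv: "x \<in> carrier G \<Longrightarrow> y \<in> carrier G \<Longrightarrow> gcomm G x y = gconj G x y \<otimes> inv y"
  by (simp add: commutator_simps)

lemma gcomm_eq_mult_inv_gconj: "x \<in> carrier G \<Longrightarrow> y \<in> carrier G \<Longrightarrow> gcomm G x y = x \<otimes> inv (gconj G y x)"
  by (simp add: commutator_simps)

lemma gcomm_eq_mult_gconj_inv: "x \<in> carrier G \<Longrightarrow> y \<in> carrier G \<Longrightarrow> gcomm G x y = x \<otimes> gconj G y (inv x)"
  by (simp add: commutator_simps)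

lemma gcomm_one_left [simp]: "x \<in> carrier G \<Longrightarrow> gcomm G \<one> x = \<one>"
  by (simp add: commutator_simps)

lemma gcomm_one_right [simp]: "x \<in> carrier G \<Longrightarrow> gcomm G x \<one> = \<one>"
  by (simp add: commutator_simps)

lemma gconj_one_left [simp]: "x \<in> carrier G \<Longrightarrow> gconj G \<one> x = x"
  by (simp add: commutator_simps)

lemma gconj_mult:
  "c \<in> carrier G \<Longrightarrow> x \<in> carrier G \<Longrightarrow> y \<in> carrier G \<Longrightarrow> gconj G c (x \<otimes> y) = gconj G c x \<otimes> gconj G c y"
  by (simp add: commutator_simps)

lemma gconj_inv: "c \<in> carrier G \<Longrightarrow> x \<in> carrier G \<Longrightarrow> gconj G c (inv x) = inv (gconj G c x)"
  by (simp add: commutator_simps)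

lemma gconj_gcomm:
  "c \<in> carrier G \<Longrightarrow> x \<in> carrier G \<Longrightarrow> y \<in> carrier G \<Longrightarrow>
   gconj G c (gcomm G x y) = gcomm G (gconj G c x) (gconj G c y)"
  by (simp add: commutator_simps)

lemma gconj_gconj:
  "c \<in> carrier G \<Longrightarrow> d \<in> carrier G \<Longrightarrow> x \<in> carrier G \<Longrightarrow> gconj G c (gconj G d x) = gconj G (c \<otimes> d) x"
  by (simp add: commutator_simps)

lemma gconj_gconj_inv [simp]: "c \<in> carrier G \<Longrightarrow> x \<in> carrier G \<Longrightarrow> gconj G c (gconj G (inv c) x) = x"
  by (simp add: commutator_simps)

lemma gconj_pow: "c \<in> carrier G \<Longrightarrow> x \<in> carrier G \<Longrightarrow> gconj G c (x [^] (n::nat)) = gconj G c x [^] n"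
  by (induct n) (simp_all add: gconj_mult, simp add: commutator_simps)

lemma gcomm_eq_one_imp_commute:
  assumes "x \<in> carrier G" "y \<in> carrier G" "gcomm G x y = \<one>"
  shows "x \<otimes> y = y \<otimes> x"
  using assms unfolding gcomm_def
  by (metis inv_closed inv_mult_group inv_inv m_closed r_inv r_one m_assoc inv_equality)

lemma normal_gconj_closed: "N \<lhd> G \<Longrightarrow> c \<in> carrier G \<Longrightarrow> x \<in> N \<Longrightarrow> gconj G c x \<in> N"
  unfolding gconj_def using normal_inv_iff by blast

lemma generate_gconj_closed:
  assumes S: "S \<subseteq> carrier G" and c: "c \<in> carrier G"
    and gens: "\<And>s. s \<in> S \<Longrightarrow> gconj G c s \<in> generate G S" and y: "y \<in> generate G S"
  shows "gconj G c y \<in> generate G S"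
  using y
proof induct
  case one then show ?case using c by (simp add: commutator_simps generate.one)
next
  case (incl s) then show ?case by (rule gens)
next
  case (inv s) then show ?case
    using c S gens [of s] generate_m_inv_closed [OF S] by (auto simp: gconj_inv)
next
  case (eng y z) then show ?case
    using c S generate_in_carrier [OF S] by (simp add: gconj_mult generate.eng)
qed

lemma normal_generate_if_gconj_closed:
  assumes S: "S \<subseteq> carrier G" and T: "T \<subseteq> carrier G" and gen: "generate G T = carrier G"
    and T_inv: "\<And>x. x \<in> T \<Longrightarrow> inv x \<in> T"
    and conj: "\<And>x s. x \<in> T \<Longrightarrow> s \<in> S \<Longrightarrow> gconj G x s \<in> S"
  shows "generate G S \<lhd> G"
proof -
  have "\<forall>y \<in> generate G S. gconj G c y \<in> generate G S" if "c \<in> generate G T" for c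
    using that
  proof induct
    case one then show ?case using generate_in_carrier [OF S] by simp
  next
    case (incl x)
    with T S conj show ?case by (blast intro: generate_gconj_closed generate.incl)
  next
    case (inv x)
    with T S conj T_inv show ?case by (blast intro: generate_gconj_closed generate.incl)
  next
    case (eng c d)
    with T have "c \<in> carrier G" "d \<in> carrier G" by (auto intro: generate_in_carrier)
    with eng S show ?case by (simp add: gconj_gconj [symmetric] generate_in_carrier)
  qed
  with gen show ?thesis
    by (intro normal_invI generate_is_subgroup S) (simp add: gconj_def)
qed

lemma generate_inv_image:
  assumes "S \<subseteq> carrier G"
  shows "generate G ((\<lambda>x. inv x) ` S) = generate G S"
proof
  show "generate G ((\<lambda>x. inv x) ` S) \<subseteq> generate G S"
    using assms by (intro generate_subgroup_incl generate_is_subgroup)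
      (auto intro: generate_m_inv_closed generate.incl)
  have "S \<subseteq> generate G ((\<lambda>x. inv x) ` S)"
  proof
    fix s assume "s \<in> S"
    then have "inv (inv s) \<in> generate G ((\<lambda>x. inv x) ` S)"
      by (intro generate.inv) auto
    then show "s \<in> generate G ((\<lambda>x. inv x) ` S)" using \<open>s \<in> S\<close> assms by auto
  qed
  then show "generate G S \<subseteq> generate G ((\<lambda>x. inv x) ` S)"
    using assms by (intro generate_subgroup_incl generate_is_subgroup) auto
qed

end

context group_hom begin

lemma hom_gconj: "x \<in> carrier G \<Longrightarrow> y \<in> carrier G \<Longrightarrow> h (gconj G x y) = gconj H (h x) (h y)"
  by (simp add: gconj_def)

lemma hom_gcomm: "x \<in> carrier G \<Longrightarrow> y \<in> carrier G \<Longrightarrow> h (gcomm G x y) = gcomm H (h x) (h y)"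
  by (simp add: gcomm_def)

end

definition center :: "('a, 'b) monoid_scheme \<Rightarrow> 'a set" where
  "center G = {z \<in> carrier G. \<forall>x \<in> carrier G. z \<otimes>\<^bsub>G\<^esub> x = x \<otimes>\<^bsub>G\<^esub> z}"

context group begin

lemma centerI: "z \<in> carrier G \<Longrightarrow> (\<And>x. x \<in> carrier G \<Longrightarrow> z \<otimes> x = x \<otimes> z) \<Longrightarrow> z \<in> center G"
  by (simp add: center_def)

lemma center_closed: "z \<in> center G \<Longrightarrow> z \<in> carrier G"
  by (simp add: center_def)

lemma centerD: "z \<in> center G \<Longrightarrow> x \<in> carrier G \<Longrightarrow> z \<otimes> x = x \<otimes> z"
  by (simp add: center_def)

lemma centralizer_contains_generate:
  assumes S: "S \<subseteq> carrier G" and z: "z \<in> carrier G"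
    and comm: "\<And>s. s \<in> S \<Longrightarrow> z \<otimes> s = s \<otimes> z" and x: "x \<in> generate G S"
  shows "z \<otimes> x = x \<otimes> z"
  using x
proof induct
  case (inv s)
  with S have sc: "s \<in> carrier G" by auto
  with z have "inv s \<otimes> (z \<otimes> s) \<otimes> inv s = inv s \<otimes> (s \<otimes> z) \<otimes> inv s"
    using inv by (simp add: comm)
  with sc z have "inv s \<otimes> z = z \<otimes> inv s" by (simp add: m_assoc)
  then show ?case by simp
next
  case (eng x y)
  with S have xy: "x \<in> carrier G" "y \<in> carrier G" by (auto intro: generate_in_carrier)
  with z have "z \<otimes> (x \<otimes> y) = (z \<otimes> x) \<otimes> y" by (simp add: m_assoc)
  also have "\<dots> = x \<otimes> (z \<otimes> y)" using xy z by (simp add: eng m_assoc)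
  also have "\<dots> = (x \<otimes> y) \<otimes> z" using xy z by (simp add: eng m_assoc)
  finally show ?case .
qed (use z comm in auto)

lemma center_if_commutes_with_generators:
  assumes "generate G S = carrier G" "S \<subseteq> carrier G" "z \<in> carrier G"
    and "\<And>s. s \<in> S \<Longrightarrow> z \<otimes> s = s \<otimes> z"
  shows "z \<in> center G"
  using centralizer_contains_generate[of S z] assms by (auto intro: centerI)

lemma gconj_center:
  assumes z: "z \<in> center G" and c: "c \<in> carrier G"
  shows "gconj G c z = z"
proof -
  have "gconj G c z = z \<otimes> c \<otimes> inv c" unfolding gconj_def using centerD [OF z c] by simp
  with c center_closed [OF z] show ?thesis by (simp add: m_assoc)
qed

lemma center_mult: "x \<in> center G \<Longrightarrow> y \<in> center G \<Longrightarrow> x \<otimes> y \<in> center G"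
  by (intro centerI) (simp_all add: center_closed m_assoc centerD, simp add: center_closed centerD flip: m_assoc)

lemma center_inv: "x \<in> center G \<Longrightarrow> inv x \<in> center G"
proof (intro centerI)
  fix y assume x: "x \<in> center G" and y: "y \<in> carrier G"
  from x have xc: "x \<in> carrier G" by (rule center_closed)
  have "inv x \<otimes> (x \<otimes> y) \<otimes> inv x = inv x \<otimes> (y \<otimes> x) \<otimes> inv x" using centerD [OF x y] by simp
  with xc y have "y \<otimes> inv x = inv x \<otimes> y" by (simp add: m_assoc)
  then show "inv x \<otimes> y = y \<otimes> inv x" by simp
qed (simp add: center_closed)

lemma subgroup_center_torsion: "subgroup {z \<in> center G. z [^] (n::nat) = \<one>} G"
proof (rule subgroupI)
  fix x y assume "x \<in> {z \<in> center G. z [^] n = \<one>}" "y \<in> {z \<in> center G. z [^] n = \<one>}"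
  then show "x \<otimes> y \<in> {z \<in> center G. z [^] n = \<one>}"
    by (simp add: center_mult center_closed centerD pow_mult_distrib)
next
  fix x assume "x \<in> {z \<in> center G. z [^] n = \<one>}"
  then show "inv x \<in> {z \<in> center G. z [^] n = \<one>}" by (simp add: center_inv center_closed nat_pow_inv)
qed (auto simp: center_def)

lemma rcos_eq_subgroup_iff:
  assumes "subgroup N G" "x \<in> carrier G"
  shows "N #> x = N \<longleftrightarrow> x \<in> N"
  using assms rcos_self[of x N] subgroup.rcos_const[of N G x] by (auto simp: is_group)

lemma group_hom_FactGroup: "N \<lhd> G \<Longrightarrow> group_hom G (G Mod N) (\<lambda>x. N #> x)"
  by (simp add: group_hom_def group_hom_axioms_def is_group normal.factorgroup_is_group
      normal.r_coset_hom_Mod)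

lemma rcos_in_center_FactGroup:
  assumes N: "N \<lhd> G" and gen: "generate G S = carrier G" and S: "S \<subseteq> carrier G"
    and x: "x \<in> carrier G" and comm: "\<And>s. s \<in> S \<Longrightarrow> gcomm G x s \<in> N"
  shows "N #> x \<in> center (G Mod N)"
proof -
  interpret \<pi>: group_hom G "G Mod N" "\<lambda>x. N #> x" by (rule group_hom_FactGroup[OF N])
  show ?thesis
  proof (rule \<pi>.H.center_if_commutes_with_generators)
    show "generate (G Mod N) ((\<lambda>x. N #> x) ` S) = carrier (G Mod N)"
      using \<pi>.generate_img[OF S] gen by (simp add: carrier_FactGroup)
    show "(\<lambda>x. N #> x) ` S \<subseteq> carrier (G Mod N)" using S by auto
    show "N #> x \<in> carrier (G Mod N)" using x by simp
  next
    fix t assume "t \<in> (\<lambda>x. N #> x) ` S"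
    then obtain s where s: "s \<in> S" "t = N #> s" by blast
    have "gcomm G x s \<in> N" by (rule comm [OF s(1)])
    with s S x N have "gcomm (G Mod N) (N #> x) t = \<one>\<^bsub>G Mod N\<^esub>"
      by (simp add: \<pi>.hom_gcomm [symmetric] rcos_eq_subgroup_iff normal_imp_subgroup subsetD)
    with s S x show "(N #> x) \<otimes>\<^bsub>G Mod N\<^esub> t = t \<otimes>\<^bsub>G Mod N\<^esub> (N #> x)"
      by (intro \<pi>.H.gcomm_eq_one_imp_commute) auto
  qed
qed

end

section \<open>Groups satisfying the defining relations of \<open>\<nu>(G)\<close>\<close>

text \<open>The argument uses only the defining relations of \<open>\<nu>(G)\<close>, so it is carried out for any
  group generated by two images \<open>\<iota>(G)\<close>, \<open>\<phi>(G)\<close> satisfying them; \<open>tcomm a b\<close> is \<open>[a, b\<^sup>\<phi>]\<close>.\<close>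

locale nu_pair = G: group G + H: group H
  for G :: "('a, 'b) monoid_scheme" and H :: "('c, 'd) monoid_scheme" +
  fixes \<iota> \<phi> :: "'a \<Rightarrow> 'c"
  assumes iota_hom: "\<iota> \<in> hom G H" and phi_hom: "\<phi> \<in> hom G H"
    and gconj_iota_tcomm: "\<And>g1 g2 g3. g1 \<in> carrier G \<Longrightarrow> g2 \<in> carrier G \<Longrightarrow> g3 \<in> carrier G \<Longrightarrow>
      gconj H (\<iota> g3) (gcomm H (\<iota> g1) (\<phi> g2)) = gcomm H (\<iota> (gconj G g3 g1)) (\<phi> (gconj G g3 g2))"
    and gconj_phi_tcomm: "\<And>g1 g2 g3. g1 \<in> carrier G \<Longrightarrow> g2 \<in> carrier G \<Longrightarrow> g3 \<in> carrier G \<Longrightarrow>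
      gconj H (\<phi> g3) (gcomm H (\<iota> g1) (\<phi> g2)) = gcomm H (\<iota> (gconj G g3 g1)) (\<phi> (gconj G g3 g2))"
    and generate_iota_phi: "generate H (\<iota> ` carrier G \<union> \<phi> ` carrier G) = carrier H"
begin

sublocale iota: group_hom G H \<iota> by unfold_locales (rule iota_hom)
sublocale phi: group_hom G H \<phi> by unfold_locales (rule phi_hom)

abbreviation tcomm :: "'a \<Rightarrow> 'a \<Rightarrow> 'c" where
  "tcomm a b \<equiv> gcomm H (\<iota> a) (\<phi> b)"

definition comm_subgroup :: "'a set \<Rightarrow> 'a set \<Rightarrow> 'c set" where
  "comm_subgroup A B = generate H {tcomm a b | a b. a \<in> A \<and> b \<in> B}"

lemma gcomm_tcomm_phi_eq_iota:
  assumes a: "a \<in> carrier G" and b: "b \<in> carrier G" and k: "k \<in> carrier G"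
  shows "gcomm H (tcomm a b) (\<phi> k) = gcomm H (tcomm a b) (\<iota> k)"
proof -
  have "gconj H (\<phi> k) (tcomm a b) = gconj H (\<iota> k) (tcomm a b)"
    using a b k by (simp add: gconj_iota_tcomm gconj_phi_tcomm)
  with a b k show ?thesis by (simp add: H.gcomm_eq_mult_inv_gconj)
qed

lemma gconj_iota_tcomm_mult_phi:
  assumes "g \<in> carrier G" "a \<in> carrier G" "b \<in> carrier G"
  shows "gconj H (\<iota> g) (tcomm a b \<otimes>\<^bsub>H\<^esub> \<phi> b)
       = tcomm (gconj G g a) (gconj G g b) \<otimes>\<^bsub>H\<^esub> (tcomm g b \<otimes>\<^bsub>H\<^esub> \<phi> b)"
proof -
  have "gconj H (\<iota> g) (\<phi> b) = tcomm g b \<otimes>\<^bsub>H\<^esub> \<phi> b"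
    using assms by (simp add: H.gconj_eq_gcomm_mult)
  with assms show ?thesis by (simp add: H.gconj_mult gconj_iota_tcomm)
qed

lemma gconj_phi_tcomm_mult_phi:
  assumes "h \<in> carrier G" "a \<in> carrier G" "b \<in> carrier G"
  shows "gconj H (\<phi> h) (tcomm a b \<otimes>\<^bsub>H\<^esub> \<phi> b)
       = tcomm (gconj G h a) (gconj G h b) \<otimes>\<^bsub>H\<^esub> \<phi> (gconj G h b)"
  using assms by (simp add: H.gconj_mult gconj_phi_tcomm phi.hom_gconj del: phi.hom_inv iota.hom_inv)

text \<open>Conjugation by \<open>[g, h\<^sup>\<phi>] = g h\<^sup>\<phi> g\<^sup>-\<^sup>1 (h\<^sup>-\<^sup>1)\<^sup>\<phi>\<close> is applied to \<open>k\<^sup>\<phi>\<close> one letter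
  at a time, each letter passing a commutator \<open>[a, b\<^sup>\<phi>]\<close> by a defining relation.\<close>
lemma gcomm_tcomm_phi:
  assumes g: "g \<in> carrier G" and h: "h \<in> carrier G" and k: "k \<in> carrier G"
  shows "gcomm H (tcomm g h) (\<phi> k) = tcomm (gcomm G g h) k"
proof -
  define k1 where "k1 = gconj G (inv\<^bsub>G\<^esub> h) k"
  define g1 where "g1 = gconj G h (inv\<^bsub>G\<^esub> g)"
  have k1: "k1 \<in> carrier G" and g1: "g1 \<in> carrier G" and hk1: "gconj G h k1 = k"
    using g h k by (simp_all add: k1_def g1_def)
  have "gconj H (tcomm g h) (\<phi> k)
      = gconj H (\<iota> g) (gconj H (\<phi> h) (gconj H (\<iota> (inv\<^bsub>G\<^esub> g)) (gconj H (\<phi> (inv\<^bsub>G\<^esub> h)) (\<phi> k))))"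
    using g h k by (simp add: gcomm_def H.gconj_gconj H.m_assoc)
  also have "gconj H (\<phi> (inv\<^bsub>G\<^esub> h)) (\<phi> k) = \<phi> k1"
    using h k by (simp add: k1_def phi.hom_gconj)
  also have "gconj H (\<iota> (inv\<^bsub>G\<^esub> g)) (\<phi> k1) = tcomm (inv\<^bsub>G\<^esub> g) k1 \<otimes>\<^bsub>H\<^esub> \<phi> k1"
    using g k1 by (simp add: H.gconj_eq_gcomm_mult)
  also have "gconj H (\<phi> h) \<dots> = tcomm g1 k \<otimes>\<^bsub>H\<^esub> \<phi> k"
    using gconj_phi_tcomm_mult_phi [of h "inv\<^bsub>G\<^esub> g" k1] g h k1 by (simp add: hk1 g1_def)
  also have "gconj H (\<iota> g) \<dots> = tcomm (gconj G g g1) (gconj G g k) \<otimes>\<^bsub>H\<^esub> (tcomm g k \<otimes>\<^bsub>H\<^esub> \<phi> k)"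
    using g g1 k by (rule gconj_iota_tcomm_mult_phi)
  finally have "gcomm H (tcomm g h) (\<phi> k) = tcomm (gconj G g g1) (gconj G g k) \<otimes>\<^bsub>H\<^esub> tcomm g k"
    using g h k g1 by (simp add: H.gcomm_eq_gconj_mult_inv H.m_assoc)
  also have "\<dots> = gcomm H (\<iota> g \<otimes>\<^bsub>H\<^esub> \<iota> g1) (\<phi> k)"
    using g g1 k by (simp add: H.gcomm_mult_left gconj_iota_tcomm)
  also have "\<dots> = tcomm (gcomm G g h) k"
    using g h by (simp add: g1_def G.gcomm_eq_mult_gconj_inv)
  finally show ?thesis .
qed

lemma nu_pair_swap: "nu_pair G H \<phi> \<iota>"
proof
  fix g1 g2 g3 assume g: "g1 \<in> carrier G" "g2 \<in> carrier G" "g3 \<in> carrier G"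
  then have swap: "gcomm H (\<phi> x) (\<iota> y) = inv\<^bsub>H\<^esub> (tcomm y x)" if "x \<in> carrier G" "y \<in> carrier G" for x y
    using that by (simp add: H.inv_gcomm)
  show "gconj H (\<phi> g3) (gcomm H (\<phi> g1) (\<iota> g2)) = gcomm H (\<phi> (gconj G g3 g1)) (\<iota> (gconj G g3 g2))"
    using g by (simp add: swap H.gconj_inv gconj_phi_tcomm)
  show "gconj H (\<iota> g3) (gcomm H (\<phi> g1) (\<iota> g2)) = gcomm H (\<phi> (gconj G g3 g1)) (\<iota> (gconj G g3 g2))"
    using g by (simp add: swap H.gconj_inv gconj_iota_tcomm)
qed (use phi_hom iota_hom generate_iota_phi in \<open>simp_all add: Un_commute\<close>)

lemma gcomm_tcomm_iota:
  "a \<in> carrier G \<Longrightarrow> b \<in> carrier G \<Longrightarrow> k \<in> carrier G \<Longrightarrow>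
   gcomm H (tcomm a b) (\<iota> k) = tcomm (gcomm G a b) k"
  by (simp add: gcomm_tcomm_phi_eq_iota [symmetric] gcomm_tcomm_phi)

lemma tcomm_gcomm_left:
  assumes x: "x \<in> carrier G" and g: "g \<in> carrier G" and z: "z \<in> carrier G"
  shows "tcomm (gcomm G x g) z = gconj H (tcomm x g) (tcomm z (gcomm G g x))"
proof -
  have "tcomm (gcomm G x g) z = gcomm H (tcomm x g) (\<iota> z)"
    using x g z by (simp add: gcomm_tcomm_iota)
  also have "\<dots> = gconj H (tcomm x g) (inv\<^bsub>H\<^esub> (gcomm H (inv\<^bsub>H\<^esub> (tcomm x g)) (\<iota> z)))"
    using x g z by (intro H.gcomm_eq_gconj_inv_gcomm_inv) simp_all
  also have "inv\<^bsub>H\<^esub> (tcomm x g) = gcomm H (\<phi> g) (\<iota> x)"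
    using x g by (simp add: H.inv_gcomm)
  also have "gcomm H (gcomm H (\<phi> g) (\<iota> x)) (\<iota> z) = gcomm H (\<phi> (gcomm G g x)) (\<iota> z)"
    using nu_pair.gcomm_tcomm_phi [OF nu_pair_swap g x z] .
  finally show ?thesis using x g z by (simp add: H.inv_gcomm)
qed

lemma tcomm_pow_right:
  assumes \<psi>: "group_hom H Q \<psi>" and a: "a \<in> carrier G" and b: "b \<in> carrier G"
    and central: "\<psi> (tcomm a b) \<in> center Q"
  shows "\<psi> (tcomm a (b [^]\<^bsub>G\<^esub> n)) = \<psi> (tcomm a b) [^]\<^bsub>Q\<^esub> (n::nat)"
proof (induct n)
  case (Suc n)
  interpret \<psi>: group_hom H Q \<psi> by (rule \<psi>)
  have "tcomm a (b [^]\<^bsub>G\<^esub> Suc n) = tcomm a (b [^]\<^bsub>G\<^esub> n) \<otimes>\<^bsub>H\<^esub> gconj H (\<phi> (b [^]\<^bsub>G\<^esub> n)) (tcomm a b)"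
    using a b by (simp add: H.gcomm_mult_right)
  then have "\<psi> (tcomm a (b [^]\<^bsub>G\<^esub> Suc n)) = \<psi> (tcomm a (b [^]\<^bsub>G\<^esub> n)) \<otimes>\<^bsub>Q\<^esub> \<psi> (tcomm a b)"
    using a b central by (simp add: \<psi>.hom_gconj \<psi>.H.gconj_center)
  with Suc show ?case by simp
qed (use \<psi> a b in \<open>simp add: group_hom.hom_one\<close>)

lemma tcomm_pow_left:
  assumes \<psi>: "group_hom H Q \<psi>" and a: "a \<in> carrier G" and b: "b \<in> carrier G"
    and central: "\<psi> (tcomm a b) \<in> center Q"
  shows "\<psi> (tcomm (a [^]\<^bsub>G\<^esub> n) b) = \<psi> (tcomm a b) [^]\<^bsub>Q\<^esub> (n::nat)"
proof (induct n)
  case (Suc n)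
  interpret \<psi>: group_hom H Q \<psi> by (rule \<psi>)
  have "tcomm (a [^]\<^bsub>G\<^esub> Suc n) b = gconj H (\<iota> (a [^]\<^bsub>G\<^esub> n)) (tcomm a b) \<otimes>\<^bsub>H\<^esub> tcomm (a [^]\<^bsub>G\<^esub> n) b"
    using a b by (simp add: H.gcomm_mult_left)
  then have "\<psi> (tcomm (a [^]\<^bsub>G\<^esub> Suc n) b) = \<psi> (tcomm a b) \<otimes>\<^bsub>Q\<^esub> \<psi> (tcomm (a [^]\<^bsub>G\<^esub> n) b)"
    using a b central by (simp add: \<psi>.hom_gconj \<psi>.H.gconj_center)
  with Suc a b \<psi>.H.centerD [OF central, of "\<psi> (tcomm a b) [^]\<^bsub>Q\<^esub> n"] show ?case by simp
qed (use \<psi> a b in \<open>simp add: group_hom.hom_one\<close>)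

lemma subgroup_tcomm_left_mem:
  assumes N: "N \<lhd> H"
  shows "subgroup {c \<in> carrier G. \<forall>h \<in> carrier G. tcomm c h \<in> N} G"
proof (rule G.subgroupI)
  fix c d assume c: "c \<in> {c \<in> carrier G. \<forall>h \<in> carrier G. tcomm c h \<in> N}"
    and d: "d \<in> {c \<in> carrier G. \<forall>h \<in> carrier G. tcomm c h \<in> N}"
  have "tcomm (c \<otimes>\<^bsub>G\<^esub> d) h \<in> N" if h: "h \<in> carrier G" for h
  proof -
    have "tcomm (c \<otimes>\<^bsub>G\<^esub> d) h = gconj H (\<iota> c) (tcomm d h) \<otimes>\<^bsub>H\<^esub> tcomm c h"
      using c d h by (simp add: H.gcomm_mult_left)
    with c d h N show ?thesis
      by (simp add: H.normal_gconj_closed subgroup.m_closed normal_imp_subgroup)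
  qed
  with c d show "c \<otimes>\<^bsub>G\<^esub> d \<in> {c \<in> carrier G. \<forall>h \<in> carrier G. tcomm c h \<in> N}" by simp
next
  fix c assume c: "c \<in> {c \<in> carrier G. \<forall>h \<in> carrier G. tcomm c h \<in> N}"
  have "tcomm (inv\<^bsub>G\<^esub> c) h \<in> N" if h: "h \<in> carrier G" for h
  proof -
    have "tcomm (inv\<^bsub>G\<^esub> c) h = gconj H (inv\<^bsub>H\<^esub> \<iota> c) (inv\<^bsub>H\<^esub> tcomm c h)"
      using c h by (simp add: H.gcomm_inv_left)
    with c h N show ?thesis
      by (simp add: H.normal_gconj_closed subgroup.m_inv_closed normal_imp_subgroup)
  qed
  with c show "inv\<^bsub>G\<^esub> c \<in> {c \<in> carrier G. \<forall>h \<in> carrier G. tcomm c h \<in> N}" by simp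
qed (auto simp: normal_imp_subgroup [OF N] subgroup.one_closed)

lemma comm_subgroup_normal:
  assumes A: "A \<lhd> G" and B: "B \<lhd> G"
  shows "comm_subgroup A B \<lhd> H"
  unfolding comm_subgroup_def
proof (rule H.normal_generate_if_gconj_closed [OF _ _ generate_iota_phi])
  have "A \<subseteq> carrier G" "B \<subseteq> carrier G"
    using A B by (simp_all add: normal_imp_subgroup subgroup.subset)
  then show "{tcomm a b | a b. a \<in> A \<and> b \<in> B} \<subseteq> carrier H"
    by (auto intro!: H.gcomm_closed iota.hom_closed phi.hom_closed)
  fix x s assume x: "x \<in> \<iota> ` carrier G \<union> \<phi> ` carrier G" and s: "s \<in> {tcomm a b | a b. a \<in> A \<and> b \<in> B}"
  then obtain g a b where g: "g \<in> carrier G" "x = \<iota> g \<or> x = \<phi> g"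
    and ab: "s = tcomm a b" "a \<in> A" "b \<in> B" by blast
  with \<open>A \<subseteq> carrier G\<close> \<open>B \<subseteq> carrier G\<close> have "a \<in> carrier G" "b \<in> carrier G" by auto
  with g ab have "gconj H x s = tcomm (gconj G g a) (gconj G g b)"
    by (auto simp: gconj_iota_tcomm gconj_phi_tcomm)
  moreover have "gconj G g a \<in> A" "gconj G g b \<in> B"
    using A B g ab by (simp_all add: G.normal_gconj_closed)
  ultimately show "gconj H x s \<in> {tcomm a b | a b. a \<in> A \<and> b \<in> B}" by blast
qed (auto simp flip: iota.hom_inv phi.hom_inv)

lemma tcomm_gcomm_mem:
  assumes B: "B \<lhd> G" and x: "x \<in> carrier G" and g: "g \<in> carrier G" and z: "z \<in> carrier G"
    and xg: "gcomm G x g \<in> B"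
  shows "tcomm (gcomm G x g) z \<in> comm_subgroup (carrier G) B"
proof -
  have "gcomm G g x \<in> B"
    using xg x g B by (metis G.inv_gcomm normal_imp_subgroup subgroup.m_inv_closed)
  with z have "tcomm z (gcomm G g x) \<in> comm_subgroup (carrier G) B"
    unfolding comm_subgroup_def by (blast intro: generate.incl)
  with x g z B show ?thesis
    by (simp add: tcomm_gcomm_left H.normal_gconj_closed comm_subgroup_normal G.normal_self)
qed

lemma rcos_tcomm_in_center:
  assumes B: "B \<lhd> G" and a: "a \<in> carrier G" and b: "b \<in> carrier G" and ab: "gcomm G a b \<in> B"
  defines "K \<equiv> comm_subgroup (carrier G) B"
  shows "K #>\<^bsub>H\<^esub> tcomm a b \<in> center (H Mod K)"
proof (rule H.rcos_in_center_FactGroup [OF _ generate_iota_phi])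
  show "K \<lhd> H" unfolding K_def by (rule comm_subgroup_normal [OF G.normal_self B])
  fix s assume "s \<in> \<iota> ` carrier G \<union> \<phi> ` carrier G"
  then obtain w where "w \<in> carrier G" "s = \<iota> w \<or> s = \<phi> w" by blast
  with a b ab B show "gcomm H (tcomm a b) s \<in> K"
    unfolding K_def by (auto simp: gcomm_tcomm_iota gcomm_tcomm_phi_eq_iota tcomm_gcomm_mem)
qed (use a b in auto)

lemma comm_subgroup_swap:
  assumes "A \<subseteq> carrier G" "B \<subseteq> carrier G"
  shows "nu_pair.comm_subgroup H \<phi> \<iota> A B = comm_subgroup B A"
proof -
  have "{gcomm H (\<phi> a) (\<iota> b) | a b. a \<in> A \<and> b \<in> B} = (\<lambda>x. inv\<^bsub>H\<^esub> x) ` {tcomm b a | b a. b \<in> B \<and> a \<in> A}"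
    using assms by (force simp: H.inv_gcomm)
  moreover have "{tcomm b a | b a. b \<in> B \<and> a \<in> A} \<subseteq> carrier H"
    using assms by (blast intro: H.gcomm_closed iota.hom_closed phi.hom_closed)
  ultimately show ?thesis
    by (simp add: nu_pair.comm_subgroup_def [OF nu_pair_swap] comm_subgroup_def H.generate_inv_image)
qed

end

section \<open>The lower central \<open>p\<close>-series\<close>

definition lower_central_p_step :: "('a, 'b) monoid_scheme \<Rightarrow> nat \<Rightarrow> 'a set \<Rightarrow> 'a set" where
  "lower_central_p_step G p A =
     generate G ({gcomm G x y | x y. x \<in> A \<and> y \<in> carrier G} \<union> {x [^]\<^bsub>G\<^esub> p | x. x \<in> A})"

lemma lcp_aux_Suc_eq_step: "lcp_aux G p (Suc k) = lower_central_p_step G p (lcp_aux G p k)"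
  by (simp add: lower_central_p_step_def)

context group begin

lemma normal_lower_central_p_step:
  assumes A: "A \<lhd> G"
  shows "lower_central_p_step G p A \<lhd> G"
  unfolding lower_central_p_step_def
proof (rule normal_generateI)
  have Ac: "A \<subseteq> carrier G" using A by (simp add: normal_imp_subgroup subgroup.subset)
  then show "{gcomm G x y | x y. x \<in> A \<and> y \<in> carrier G} \<union> {x [^] p | x. x \<in> A} \<subseteq> carrier G"
    by auto
  fix s g assume s: "s \<in> {gcomm G x y | x y. x \<in> A \<and> y \<in> carrier G} \<union> {x [^] p | x. x \<in> A}"
    and g: "g \<in> carrier G"
  have "gconj G g s \<in> {gcomm G x y | x y. x \<in> A \<and> y \<in> carrier G} \<union> {x [^] p | x. x \<in> A}"
    using s
  proof
    assume "s \<in> {gcomm G x y | x y. x \<in> A \<and> y \<in> carrier G}"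
    then obtain x y where "s = gcomm G x y" "x \<in> A" "y \<in> carrier G" by blast
    moreover have "gconj G g x \<in> A" "gconj G g y \<in> carrier G"
      using Ac g A \<open>x \<in> A\<close> \<open>y \<in> carrier G\<close> by (auto simp: normal_gconj_closed)
    moreover have "gconj G g s = gcomm G (gconj G g x) (gconj G g y)"
      using Ac g \<open>s = gcomm G x y\<close> \<open>x \<in> A\<close> \<open>y \<in> carrier G\<close> by (auto simp: gconj_gcomm)
    ultimately show ?thesis by blast
  next
    assume "s \<in> {x [^] p | x. x \<in> A}"
    then obtain x where "s = x [^] p" "x \<in> A" by blast
    with Ac g A show ?thesis by (auto simp: gconj_pow normal_gconj_closed subsetD)
  qed
  then show "g \<otimes> s \<otimes> inv g \<in> {gcomm G x y | x y. x \<in> A \<and> y \<in> carrier G} \<union> {x [^] p | x. x \<in> A}"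
    by (simp add: gconj_def)
qed

lemma normal_lcp_aux: "lcp_aux G p k \<lhd> G"
  by (induct k) (simp_all add: normal_self normal_lower_central_p_step lcp_aux_Suc_eq_step del: lcp_aux.simps(2))

end

context nu_pair begin

lemma comm_subgroup_generate_subset:
  assumes S: "S \<subseteq> carrier G" and N: "N \<lhd> H"
    and gens: "\<And>s h. s \<in> S \<Longrightarrow> h \<in> carrier G \<Longrightarrow> tcomm s h \<in> N"
  shows "comm_subgroup (generate G S) (carrier G) \<subseteq> N"
proof -
  have "generate G S \<subseteq> {c \<in> carrier G. \<forall>h \<in> carrier G. tcomm c h \<in> N}"
    using S gens by (intro G.generate_subgroup_incl subgroup_tcomm_left_mem N) auto
  then have "{tcomm c h | c h. c \<in> generate G S \<and> h \<in> carrier G} \<subseteq> N" by blast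
  then show ?thesis
    unfolding comm_subgroup_def by (rule H.generate_subgroup_incl [OF _ normal_imp_subgroup [OF N]])
qed

lemma rcos_comm_subgroup_center_torsion:
  assumes B: "B \<lhd> G" and A: "A \<subseteq> carrier G"
    and comm: "\<And>g b. g \<in> carrier G \<Longrightarrow> b \<in> A \<Longrightarrow> gcomm G g b \<in> B"
    and pow: "\<And>b. b \<in> A \<Longrightarrow> b [^]\<^bsub>G\<^esub> (p::nat) \<in> B"
  defines "K \<equiv> comm_subgroup (carrier G) B"
  shows "(\<lambda>h. K #>\<^bsub>H\<^esub> h) ` comm_subgroup (carrier G) A
      \<subseteq> {z \<in> center (H Mod K). z [^]\<^bsub>H Mod K\<^esub> p = \<one>\<^bsub>H Mod K\<^esub>}"
proof -
  have K: "K \<lhd> H" unfolding K_def by (rule comm_subgroup_normal [OF G.normal_self B])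
  interpret \<pi>: group_hom H "H Mod K" "\<lambda>h. K #>\<^bsub>H\<^esub> h" by (rule H.group_hom_FactGroup [OF K])
  have gens: "{tcomm g b | g b. g \<in> carrier G \<and> b \<in> A} \<subseteq> carrier H"
    using A by (auto intro!: H.gcomm_closed iota.hom_closed phi.hom_closed)
  have central: "K #>\<^bsub>H\<^esub> tcomm g b \<in> center (H Mod K)" if "g \<in> carrier G" "b \<in> A" for g b
    unfolding K_def using that A by (auto intro: rcos_tcomm_in_center B comm)
  have "(K #>\<^bsub>H\<^esub> tcomm g b) [^]\<^bsub>H Mod K\<^esub> p = \<one>\<^bsub>H Mod K\<^esub>" if g: "g \<in> carrier G" and b: "b \<in> A" for g b
  proof -
    have bc: "b \<in> carrier G" using b A by auto
    have "(K #>\<^bsub>H\<^esub> tcomm g b) [^]\<^bsub>H Mod K\<^esub> p = K #>\<^bsub>H\<^esub> tcomm g (b [^]\<^bsub>G\<^esub> p)"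
      by (rule tcomm_pow_right [OF \<pi>.group_hom_axioms g bc central [OF g b], symmetric])
    also have "tcomm g (b [^]\<^bsub>G\<^esub> p) \<in> K"
      unfolding K_def comm_subgroup_def using g b pow by (blast intro: generate.incl)
    then have "K #>\<^bsub>H\<^esub> tcomm g (b [^]\<^bsub>G\<^esub> p) = \<one>\<^bsub>H Mod K\<^esub>"
      using g bc normal_imp_subgroup [OF K] by (simp add: H.rcos_eq_subgroup_iff)
    finally show ?thesis .
  qed
  then show ?thesis
    unfolding comm_subgroup_def \<pi>.generate_img [OF gens, symmetric] using central
    by (intro \<pi>.H.generate_subgroup_incl \<pi>.H.subgroup_center_torsion) blast
qed

lemma comm_subgroup_lower_central_p_step_incl:
  assumes A: "A \<lhd> G" and IH: "comm_subgroup A (carrier G) \<subseteq> comm_subgroup (carrier G) A"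
  shows "comm_subgroup (lower_central_p_step G p A) (carrier G)
      \<subseteq> comm_subgroup (carrier G) (lower_central_p_step G p A)"
proof -
  define B where "B = lower_central_p_step G p A"
  define K where "K = comm_subgroup (carrier G) B"
  have Ac: "A \<subseteq> carrier G" using A by (simp add: normal_imp_subgroup subgroup.subset)
  have B: "B \<lhd> G" unfolding B_def by (rule G.normal_lower_central_p_step [OF A])
  have K: "K \<lhd> H" unfolding K_def by (rule comm_subgroup_normal [OF G.normal_self B])
  interpret \<pi>: group_hom H "H Mod K" "\<lambda>h. K #>\<^bsub>H\<^esub> h" by (rule H.group_hom_FactGroup [OF K])
  have comm_in_B: "gcomm G x g \<in> B" "gcomm G g x \<in> B" if "x \<in> A" "g \<in> carrier G" for x g
  proof -
    show xg: "gcomm G x g \<in> B" unfolding B_def lower_central_p_step_def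
      using that by (blast intro: generate.incl)
    show "gcomm G g x \<in> B"
      using subgroup.m_inv_closed [OF normal_imp_subgroup [OF B] xg] that Ac by (auto simp: G.inv_gcomm)
  qed
  have pow_in_B: "x [^]\<^bsub>G\<^esub> p \<in> B" if "x \<in> A" for x
    unfolding B_def lower_central_p_step_def using that by (blast intro: generate.incl)
  have pow_gen: "tcomm (x [^]\<^bsub>G\<^esub> p) h \<in> K" if x: "x \<in> A" and h: "h \<in> carrier G" for x h
  proof -
    have xc: "x \<in> carrier G" using x Ac by auto
    have "K #>\<^bsub>H\<^esub> tcomm x h \<in> center (H Mod K)"
      unfolding K_def using x h xc by (auto intro: rcos_tcomm_in_center B comm_in_B)
    then have "K #>\<^bsub>H\<^esub> tcomm (x [^]\<^bsub>G\<^esub> p) h = (K #>\<^bsub>H\<^esub> tcomm x h) [^]\<^bsub>H Mod K\<^esub> p"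
      by (rule tcomm_pow_left [OF \<pi>.group_hom_axioms xc h])
    also have "tcomm x h \<in> comm_subgroup (carrier G) A"
      using x h IH unfolding comm_subgroup_def by (blast intro: generate.incl)
    with rcos_comm_subgroup_center_torsion [OF B Ac, of p] comm_in_B pow_in_B
    have "(K #>\<^bsub>H\<^esub> tcomm x h) [^]\<^bsub>H Mod K\<^esub> p = \<one>\<^bsub>H Mod K\<^esub>"
      unfolding K_def by blast
    finally show ?thesis
      using xc h normal_imp_subgroup [OF K] by (simp add: H.rcos_eq_subgroup_iff)
  qed
  have "comm_subgroup B (carrier G) \<subseteq> K"
    unfolding B_def lower_central_p_step_def
  proof (rule comm_subgroup_generate_subset [OF _ K])
    show "{gcomm G x y | x y. x \<in> A \<and> y \<in> carrier G} \<union> {x [^]\<^bsub>G\<^esub> p | x. x \<in> A} \<subseteq> carrier G"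
      using Ac by auto
    fix s h assume "s \<in> {gcomm G x y | x y. x \<in> A \<and> y \<in> carrier G} \<union> {x [^]\<^bsub>G\<^esub> p | x. x \<in> A}"
      and h: "h \<in> carrier G"
    with Ac pow_gen comm_in_B show "tcomm s h \<in> K"
      by (auto simp: tcomm_gcomm_mem [OF B, folded K_def] subsetD)
  qed
  then show ?thesis unfolding B_def K_def .
qed

lemma comm_subgroup_lcp_aux_incl:
  "comm_subgroup (lcp_aux G p k) (carrier G) \<subseteq> comm_subgroup (carrier G) (lcp_aux G p k)"
proof (induct k)
  case (Suc k)
  then show ?case
    unfolding lcp_aux_Suc_eq_step by (rule comm_subgroup_lower_central_p_step_incl [OF G.normal_lcp_aux])
qed simp

lemma comm_subgroup_lcp_aux_eq:
  "comm_subgroup (lcp_aux G p k) (carrier G) = comm_subgroup (carrier G) (lcp_aux G p k)"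
proof
  have L: "lcp_aux G p k \<subseteq> carrier G"
    using G.normal_lcp_aux [of p k] by (simp add: normal_imp_subgroup subgroup.subset)
  show "comm_subgroup (carrier G) (lcp_aux G p k) \<subseteq> comm_subgroup (lcp_aux G p k) (carrier G)"
    using nu_pair.comm_subgroup_lcp_aux_incl [OF nu_pair_swap, of p k]
    by (simp add: comm_subgroup_swap L)
qed (rule comm_subgroup_lcp_aux_incl)

end

section \<open>Presented groups\<close>

lemma words_append [simp]: "u @ v \<in> words S \<longleftrightarrow> u \<in> words S \<and> v \<in> words S"
  by (auto simp: words_def)

lemma words_Nil [simp]: "[] \<in> words S"
  by (simp add: words_def)

lemma words_Cons [simp]: "a # v \<in> words S \<longleftrightarrow> fst a \<in> S \<and> v \<in> words S"
  by (cases a) (auto simp: words_def)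

lemma inv_word_Nil [simp]: "inv_word [] = []"
  by (simp add: inv_word_def)

lemma inv_word_Cons [simp]: "inv_word (a # w) = inv_word w @ [(fst a, \<not> snd a)]"
  by (cases a) (simp add: inv_word_def)

lemma inv_word_words [simp]: "inv_word w \<in> words S \<longleftrightarrow> w \<in> words S"
  by (auto simp: inv_word_def words_def)

lemma inv_word_inv_word [simp]: "inv_word (inv_word w) = w"
  by (simp add: inv_word_def rev_map comp_def case_prod_beta)

lemma pres_rel_words: "(u, v) \<in> pres_rel S R \<Longrightarrow> u \<in> words S \<and> v \<in> words S"
  by (induct rule: pres_rel.induct) auto

lemma equiv_pres_rel: "equiv (words S) (pres_rel S R)"
proof (rule equivI)
  show "refl_on (words S) (pres_rel S R)"
    unfolding refl_on_def using pres_rel_words pres_rel.refl by blast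
  show "sym (pres_rel S R)" unfolding sym_def using pres_rel.sym by blast
  show "trans (pres_rel S R)" unfolding trans_def using pres_rel.trans by blast
  show "pres_rel S R \<subseteq> words S \<times> words S" using pres_rel_words by auto
qed

lemma pres_rel_append:
  assumes u: "(u, u') \<in> pres_rel S R" and v: "(v, v') \<in> pres_rel S R"
  shows "(u @ v, u' @ v') \<in> pres_rel S R"
proof -
  have "([] @ u @ v, [] @ u' @ v) \<in> pres_rel S R"
    using pres_rel.ctxt [OF u, of "[]" v] pres_rel_words [OF v] by simp
  moreover have "(u' @ v @ [], u' @ v' @ []) \<in> pres_rel S R"
    using pres_rel.ctxt [OF v, of u' "[]"] pres_rel_words [OF u] by simp
  ultimately show ?thesis using pres_rel.trans by simp
qed

lemma pres_rel_cancel: "w \<in> words S \<Longrightarrow> (w @ inv_word w, []) \<in> pres_rel S R"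
proof (induct w)
  case Nil then show ?case using pres_rel.refl [of "[]" S R] by simp
next
  case (Cons a w)
  obtain s b where a: "a = (s, b)" by (cases a)
  with Cons have s: "s \<in> S" and w: "w \<in> words S" by auto
  have "([a] @ (w @ inv_word w) @ [(s, \<not> b)], [a] @ [] @ [(s, \<not> b)]) \<in> pres_rel S R"
    using pres_rel.ctxt [OF Cons(1) [OF w], of "[a]" "[(s, \<not> b)]"] s a by simp
  with pres_rel.cancel [OF s, of b R] a show ?case using pres_rel.trans by simp
qed

lemma pres_rel_cancel_left: "w \<in> words S \<Longrightarrow> (inv_word w @ w, []) \<in> pres_rel S R"
  using pres_rel_cancel [of "inv_word w" S R] by simp

lemma pres_rel_if_quotient_trivial:
  assumes r: "(u @ inv_word v, []) \<in> pres_rel S R" and u: "u \<in> words S" and v: "v \<in> words S"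
  shows "(u, v) \<in> pres_rel S R"
proof -
  have "((u @ inv_word v) @ v, [] @ v) \<in> pres_rel S R"
    using pres_rel_append [OF r pres_rel.refl [OF v]] .
  moreover have "(u @ (inv_word v @ v), u @ []) \<in> pres_rel S R"
    using pres_rel_append [OF pres_rel.refl [OF u] pres_rel_cancel_left [OF v]] .
  ultimately show ?thesis using pres_rel.trans pres_rel.sym by (metis append.assoc append.right_neutral append_Nil)
qed

lemma pres_mult_classes:
  assumes u: "u \<in> words S" and v: "v \<in> words S"
  shows "pres_mult S R (pres_rel S R `` {u}) (pres_rel S R `` {v}) = pres_rel S R `` {u @ v}"
proof -
  let ?r = "pres_rel S R"
  have "(SOME x. x \<in> ?r `` {u}) \<in> ?r `` {u}"
    by (rule someI) (rule equiv_class_self [OF equiv_pres_rel u])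
  moreover have "(SOME y. y \<in> ?r `` {v}) \<in> ?r `` {v}"
    by (rule someI) (rule equiv_class_self [OF equiv_pres_rel v])
  ultimately have "((SOME x. x \<in> ?r `` {u}) @ (SOME y. y \<in> ?r `` {v}), u @ v) \<in> ?r"
    using pres_rel_append [of _ u S R _ v] pres_rel.sym by blast
  then show ?thesis unfolding pres_mult_def by (rule equiv_class_eq [OF equiv_pres_rel])
qed

lemma group_presented_group: "group (presented_group S R)"
proof (rule groupI)
  let ?r = "pres_rel S R"
  let ?P = "presented_group S R"
  have car: "carrier ?P = words S // ?r"
    and mul: "x \<otimes>\<^bsub>?P\<^esub> y = pres_mult S R x y"
    and one: "\<one>\<^bsub>?P\<^esub> = ?r `` {[]}" for x y
    by (simp_all add: presented_group_def)
  fix x y z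
  show "\<one>\<^bsub>?P\<^esub> \<in> carrier ?P" unfolding car one by (rule quotientI) simp
  assume x: "x \<in> carrier ?P"
  then obtain u where u: "x = ?r `` {u}" "u \<in> words S" unfolding car by (rule quotientE)
  show "\<one>\<^bsub>?P\<^esub> \<otimes>\<^bsub>?P\<^esub> x = x" unfolding one mul u(1) using pres_mult_classes [of "[]" S u R] u by simp
  show "\<exists>y \<in> carrier ?P. y \<otimes>\<^bsub>?P\<^esub> x = \<one>\<^bsub>?P\<^esub>"
  proof
    show "?r `` {inv_word u} \<in> carrier ?P" unfolding car using u by (simp add: quotientI)
    show "?r `` {inv_word u} \<otimes>\<^bsub>?P\<^esub> x = \<one>\<^bsub>?P\<^esub>" unfolding one mul u(1)
      using pres_mult_classes [of "inv_word u" S u R] u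
        equiv_class_eq [OF equiv_pres_rel pres_rel_cancel_left [OF u(2)]] by simp
  qed
  assume y: "y \<in> carrier ?P"
  then obtain v where v: "y = ?r `` {v}" "v \<in> words S" unfolding car by (rule quotientE)
  show "x \<otimes>\<^bsub>?P\<^esub> y \<in> carrier ?P"
    unfolding mul u(1) v(1) car using pres_mult_classes [OF u(2) v(2)] u v by (simp add: quotientI)
  assume z: "z \<in> carrier ?P"
  then obtain w where w: "z = ?r `` {w}" "w \<in> words S" unfolding car by (rule quotientE)
  show "x \<otimes>\<^bsub>?P\<^esub> y \<otimes>\<^bsub>?P\<^esub> z = x \<otimes>\<^bsub>?P\<^esub> (y \<otimes>\<^bsub>?P\<^esub> z)"
    unfolding mul u(1) v(1) w(1) using u v w by (simp add: pres_mult_classes)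
qed

section \<open>The group \<open>\<nu>(G)\<close>\<close>

lemma Inl_in_Plus [simp]: "Inl a \<in> A <+> B \<longleftrightarrow> a \<in> A"
  by (auto simp: Plus_def)

lemma Inr_in_Plus [simp]: "Inr a \<in> A <+> B \<longleftrightarrow> a \<in> B"
  by (auto simp: Plus_def)

context group begin

abbreviation "nu_gens \<equiv> carrier G <+> carrier G"
abbreviation "nu_rels \<equiv> free_prod_relators G \<union> nu_relators G"
abbreviation "nu_class w \<equiv> pres_rel nu_gens nu_rels `` {w}"

lemma nu_eq_presented_group: "nu G = presented_group nu_gens nu_rels"
  by (simp add: nu_def)

lemma group_nu: "group (nu G)"
  unfolding nu_eq_presented_group by (rule group_presented_group)

lemma nu_class_in_carrier: "w \<in> words nu_gens \<Longrightarrow> nu_class w \<in> carrier (nu G)"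
  unfolding nu_eq_presented_group by (simp add: presented_group_def quotientI)

lemma nu_class_mult:
  "u \<in> words nu_gens \<Longrightarrow> v \<in> words nu_gens \<Longrightarrow> nu_class u \<otimes>\<^bsub>nu G\<^esub> nu_class v = nu_class (u @ v)"
  unfolding nu_eq_presented_group by (simp add: presented_group_def pres_mult_classes)

lemma nu_class_eq: "(u, v) \<in> pres_rel nu_gens nu_rels \<Longrightarrow> nu_class u = nu_class v"
  by (rule equiv_class_eq [OF equiv_pres_rel])

lemma one_nu: "\<one>\<^bsub>nu G\<^esub> = nu_class []"
  unfolding nu_eq_presented_group by (simp add: presented_group_def)

lemma inv_nu_class:
  assumes w: "w \<in> words nu_gens"
  shows "inv\<^bsub>nu G\<^esub> (nu_class w) = nu_class (inv_word w)"
proof (rule group.inv_equality [OF group_nu])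
  show "nu_class (inv_word w) \<otimes>\<^bsub>nu G\<^esub> nu_class w = \<one>\<^bsub>nu G\<^esub>"
    using w nu_class_mult [of "inv_word w" w] nu_class_eq [OF pres_rel_cancel_left [OF w]]
    by (simp add: one_nu)
qed (use w nu_class_in_carrier in simp_all)

lemma inv_nu_class_letter: "x \<in> nu_gens \<Longrightarrow> inv\<^bsub>nu G\<^esub> (nu_class [(x, False)]) = nu_class [(x, True)]"
  using inv_nu_class [of "[(x, False)]"] by simp

lemma gcomm_nu_class:
  "x \<in> nu_gens \<Longrightarrow> y \<in> nu_gens \<Longrightarrow>
   gcomm (nu G) (nu_class [(x, False)]) (nu_class [(y, False)]) = nu_class (comm_word x y)"
  by (simp add: gcomm_def inv_nu_class_letter comm_word_def nu_class_mult)

lemma gconj_nu_class: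
  "c \<in> nu_gens \<Longrightarrow> w \<in> words nu_gens \<Longrightarrow>
   gconj (nu G) (nu_class [(c, False)]) (nu_class w) = nu_class (conj_word c w)"
  by (simp add: gconj_def inv_nu_class_letter conj_word_def nu_class_mult)

lemma nu_class_eq_if_relator:
  assumes "u @ inv_word v \<in> nu_rels" "u \<in> words nu_gens" "v \<in> words nu_gens"
  shows "nu_class u = nu_class v"
  using assms pres_rel.relator [OF assms(1)]
  by (intro nu_class_eq pres_rel_if_quotient_trivial [of u v]) simp_all

lemma nu_emb_hom: "nu_emb G \<in> hom G (nu G)"
proof (rule homI)
  fix g h assume g: "g \<in> carrier G" and h: "h \<in> carrier G"
  have "nu_class [(Inl g, False), (Inl h, False)] = nu_class [(Inl (g \<otimes> h), False)]"
    using g h by (intro nu_class_eq_if_relator) (simp_all add: free_prod_relators_def)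
  with g h show "nu_emb G (g \<otimes> h) = nu_emb G g \<otimes>\<^bsub>nu G\<^esub> nu_emb G h"
    by (simp add: nu_emb_def nu_class_mult)
qed (simp add: nu_emb_def nu_class_in_carrier)

lemma nu_phi_hom: "nu_phi G \<in> hom G (nu G)"
proof (rule homI)
  fix g h assume g: "g \<in> carrier G" and h: "h \<in> carrier G"
  have "nu_class [(Inr g, False), (Inr h, False)] = nu_class [(Inr (g \<otimes> h), False)]"
    using g h by (intro nu_class_eq_if_relator) (simp_all add: free_prod_relators_def)
  with g h show "nu_phi G (g \<otimes> h) = nu_phi G g \<otimes>\<^bsub>nu G\<^esub> nu_phi G h"
    by (simp add: nu_phi_def nu_class_mult)
qed (simp add: nu_phi_def nu_class_in_carrier)

lemma gconj_nu_class_tcomm: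
  assumes c: "c \<in> nu_gens" and g: "g1 \<in> carrier G" "g2 \<in> carrier G" "g3 \<in> carrier G"
    and r: "conj_word c (comm_word (Inl g1) (Inr g2))
            @ inv_word (comm_word (Inl (gconj G g3 g1)) (Inr (gconj G g3 g2))) \<in> nu_rels"
  shows "gconj (nu G) (nu_class [(c, False)]) (gcomm (nu G) (nu_emb G g1) (nu_phi G g2))
       = gcomm (nu G) (nu_emb G (gconj G g3 g1)) (nu_phi G (gconj G g3 g2))"
proof -
  have "nu_class (conj_word c (comm_word (Inl g1) (Inr g2)))
      = nu_class (comm_word (Inl (gconj G g3 g1)) (Inr (gconj G g3 g2)))"
    using c g by (intro nu_class_eq_if_relator [OF r]) (simp_all add: conj_word_def comm_word_def)
  with c g show ?thesis
    by (simp add: nu_emb_def nu_phi_def gcomm_nu_class gconj_nu_class comm_word_def)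
qed

lemma generate_nu_emb_phi: "generate (nu G) (nu_emb G ` carrier G \<union> nu_phi G ` carrier G) = carrier (nu G)"
proof
  let ?T = "nu_emb G ` carrier G \<union> nu_phi G ` carrier G"
  have "?T \<subseteq> carrier (nu G)" by (auto simp: nu_emb_def nu_phi_def nu_class_in_carrier)
  then show "generate (nu G) ?T \<subseteq> carrier (nu G)" by (rule group.generate_incl [OF group_nu])
  have letter: "nu_class [(s, b)] \<in> generate (nu G) ?T" if s: "s \<in> nu_gens" for s b
  proof -
    have gen: "nu_class [(s, False)] \<in> ?T" using s by (auto simp: nu_emb_def nu_phi_def Plus_def)
    show ?thesis
    proof (cases b)
      case True
      with s have "nu_class [(s, b)] = inv\<^bsub>nu G\<^esub> nu_class [(s, False)]" by (simp add: inv_nu_class_letter)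
      then show ?thesis using generate.inv [OF gen] by simp
    qed (use generate.incl [OF gen] in simp)
  qed
  have "nu_class w \<in> generate (nu G) ?T" if "w \<in> words nu_gens" for w
    using that
  proof (induct w)
    case Nil then show ?case using generate.one [of "nu G" ?T] by (simp add: one_nu)
  next
    case (Cons a w)
    then have "nu_class (a # w) = nu_class [a] \<otimes>\<^bsub>nu G\<^esub> nu_class w" by (simp add: nu_class_mult)
    with Cons letter [of "fst a" "snd a"] show ?case by (simp add: generate.eng)
  qed
  then show "carrier (nu G) \<subseteq> generate (nu G) ?T"
    unfolding nu_eq_presented_group by (auto simp: presented_group_def elim!: quotientE)
qed

lemma nu_pair_nu: "nu_pair G (nu G) (nu_emb G) (nu_phi G)"
proof (intro nu_pair.intro nu_pair_axioms.intro is_group group_nu nu_emb_hom nu_phi_hom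
    generate_nu_emb_phi)
  fix g1 g2 g3 assume g: "g1 \<in> carrier G" "g2 \<in> carrier G" "g3 \<in> carrier G"
  show "gconj (nu G) (nu_emb G g3) (gcomm (nu G) (nu_emb G g1) (nu_phi G g2))
      = gcomm (nu G) (nu_emb G (gconj G g3 g1)) (nu_phi G (gconj G g3 g2))"
    unfolding nu_emb_def [of G g3] by (rule gconj_nu_class_tcomm) (use g in \<open>auto simp: nu_relators_def\<close>)
  show "gconj (nu G) (nu_phi G g3) (gcomm (nu G) (nu_emb G g1) (nu_phi G g2))
      = gcomm (nu G) (nu_emb G (gconj G g3 g1)) (nu_phi G (gconj G g3 g2))"
    unfolding nu_phi_def [of G g3] by (rule gconj_nu_class_tcomm) (use g in \<open>auto simp: nu_relators_def\<close>)
qed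

end

theorem lemma4p1:
  fixes G :: "('a, 'b) monoid_scheme" and p k :: nat
  assumes "p_group G p" and "k \<ge> 1"
  shows "nu_comm_subgroup G (lower_central_p G p k) (carrier G)
       = nu_comm_subgroup G (carrier G) (lower_central_p G p k)"
proof -
  from assms(1) have "group G" by (simp add: p_group_def)
  then interpret nu_pair G "nu G" "nu_emb G" "nu_phi G" by (rule group.nu_pair_nu)
  show ?thesis
    using comm_subgroup_lcp_aux_eq [of p "k - 1"]
    by (simp add: nu_comm_subgroup_def comm_subgroup_def lower_central_p_def)
qed

end
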